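(* Let $\{P_\theta\}_{\theta\in\Theta}$ be a family of distributions on a space $\mathcal{X}$, with $\Theta$ equipped with a metric $d$. Let $T\in\mathbb{N}\cup\{\infty\}$, $\theta_0,\theta_1\in\Theta$, and let $X_1,X_2,\ldots$ be independent with $X_t\sim P_{\theta_0}$ for $t\le T$ and $X_t\sim P_{\theta_1}$ for $t>T$. Fix $\alpha\in(0,1)$ and suppose that for any $\theta\in\Theta$ we can construct level-$(1-\alpha)$ confidence sequences with pointwise width $w(\cdot,\theta,\alpha)$. Let $\tau$ be the stopping time of the BCS-Detector built from a nested forward confidence sequence $\{C_t\}_{t\ge1}$ and nested backward confidence sequences $\{B^{(n)}_t\}_{t\in[n]}$, $n\ge1$. Then: (i) If $T=\infty$, then $\mathbb{E}_\infty[\tau]\ge\frac{1}{2\alpha}-\frac32$. (ii) Suppose $T<\infty$ and the pre-change parameter $\theta_0$ is not known. Let $\mathcal{E}=\{\theta_0\in C_t \text{ for all } 1\le t<T\}$ (so that $\mathbb{P}_T(\mathcal{E})\ge1-\alpha$). Then for $\alpha\in(0,0.5)$, $$\mathbb{E}_T\big[(\tau-T)^+\,\big|\,\mathcal{E}\big]\le\frac{3\,u_0(\theta_0,\theta_1,T)}{1-\alpha},$$ where $u_0:=\min\{t\ge1:\ w(t,\theta_1,\alpha)+w(T,\theta_0,\alpha)<d(\theta_1,\theta_0)\}$.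
   Context: $\mathbb{P}_T,\mathbb{E}_T$ denote probability/expectation when the change occurs at time $T$; $\mathbb{P}_\infty,\mathbb{E}_\infty$ when there is no change. A level-$(1-\alpha)$ (forward) confidence sequence is a sequence of sets $C_t\subset\Theta$ with $C_t$ being $\sigma(X_1,\ldots,X_t)$-measurable and such that if the data are i.i.d. from $P_\theta$ then $\mathbb{P}(\forall t\ge1:\theta\in C_t)\ge1-\alpha$; it is nested if $C_t\subset C_s$ for $s<t$ (any CS can be made nested by replacing $C_t$ with $\cap_{s\le t}C_s$). For each $n\ge1$, a backward confidence sequence is a family $\{B^{(n)}_t\}_{1\le t\le n}$ of subsets of $\Theta$ with $B^{(n)}_t$ being $\sigma(X_t,\ldots,X_n)$-measurable and, if the data are i.i.d. from $P_\theta$, $\mathbb{P}(\forall t\in[n]:\theta\in B^{(n)}_t)\ge1-\alpha$; it is obtained by applying the forward construction to the reversed observations $Y_s=X_{n+1-s}$, $s\in[n]$, and re-indexing, and it is nested in the sense $B^{(n)}_s\subset B^{(n)}_{s'}$ for $s<s'$. A function $w(t,\theta,\alpha)$ is a pointwise width if for all $t$ and $\theta$, the set built from $t$ observations drawn i.i.d. from $P_\theta$ satisfies $\sup_{\theta'\in C_t}d(\theta,\theta')\le w(t,\theta,\alpha)$. The BCS-Detector stops at $\tau:=\inf\{n\ge1:\ C_n\cap B^{(n)}_1=\emptyset\}$. *)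

theory Defs
  imports "HOL-Probability.Probability"
begin

text \<open>Observations are indexed by t = 1, 2, ...; a data path is omega :: nat => 'x
  (the value at index 0 is irrelevant).  The change point T ranges over enat
  (T = \<infinity> means no change).\<close>

definition chlaw :: "('p \<Rightarrow> 'x measure) \<Rightarrow> 'p \<Rightarrow> 'p \<Rightarrow> enat \<Rightarrow> (nat \<Rightarrow> 'x) measure" where
  "chlaw P th0 th1 T = (\<Pi>\<^sub>M t\<in>UNIV. (if enat t \<le> T then P th0 else P th1))"

definition iidlaw :: "('p \<Rightarrow> 'x measure) \<Rightarrow> 'p \<Rightarrow> (nat \<Rightarrow> 'x) measure" where
  "iidlaw P th = (\<Pi>\<^sub>M t\<in>UNIV. P th)"

definition revseq :: "nat \<Rightarrow> (nat \<Rightarrow> 'x) \<Rightarrow> (nat \<Rightarrow> 'x)" where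
  "revseq n \<omega> = (\<lambda>s. if 1 \<le> s \<and> s \<le> n then \<omega> (n + 1 - s) else \<omega> s)"

text \<open>Backward confidence sequence B^(n)_t: the forward construction C applied to
  the reversed observations, re-indexed.\<close>
definition bwdcs :: "(nat \<Rightarrow> (nat \<Rightarrow> 'x) \<Rightarrow> 'p set) \<Rightarrow> nat \<Rightarrow> nat \<Rightarrow> (nat \<Rightarrow> 'x) \<Rightarrow> 'p set" where
  "bwdcs C n t \<omega> = C (n + 1 - t) (revseq n \<omega>)"

definition is_fwd_cs :: "('p \<Rightarrow> 'x measure) \<Rightarrow> real \<Rightarrow> (nat \<Rightarrow> (nat \<Rightarrow> 'x) \<Rightarrow> 'p set) \<Rightarrow> bool" where
  "is_fwd_cs P \<alpha> C \<longleftrightarrow>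
     (\<forall>t \<omega> \<omega>'. (\<forall>s\<in>{1..t}. \<omega> s = \<omega>' s) \<longrightarrow> C t \<omega> = C t \<omega>') \<and>
     (\<forall>th. measure (iidlaw P th) {\<omega>\<in>space (iidlaw P th). \<forall>t\<ge>1. th \<in> C t \<omega>} \<ge> 1 - \<alpha>)"

definition nested_cs :: "(nat \<Rightarrow> (nat \<Rightarrow> 'x) \<Rightarrow> 'p set) \<Rightarrow> bool" where
  "nested_cs C \<longleftrightarrow> (\<forall>\<omega> s t. 1 \<le> s \<longrightarrow> s < t \<longrightarrow> C t \<omega> \<subseteq> C s \<omega>)"

definition pointwise_width ::
  "('p::metric_space \<Rightarrow> 'x measure) \<Rightarrow> real \<Rightarrow> (nat \<Rightarrow> 'p \<Rightarrow> real \<Rightarrow> real) \<Rightarrow> (nat \<Rightarrow> (nat \<Rightarrow> 'x) \<Rightarrow> 'p set) \<Rightarrow> bool" where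
  "pointwise_width P \<alpha> w C \<longleftrightarrow>
     (\<forall>t th. 1 \<le> t \<longrightarrow> (AE \<omega> in iidlaw P th. \<forall>th'\<in>C t \<omega>. dist th th' \<le> w t th \<alpha>))"

definition bcs_tau :: "(nat \<Rightarrow> (nat \<Rightarrow> 'x) \<Rightarrow> 'p set) \<Rightarrow> (nat \<Rightarrow> 'x) \<Rightarrow> enat" where
  "bcs_tau C \<omega> = (if \<exists>n\<ge>1. C n \<omega> \<inter> bwdcs C n 1 \<omega> = {}
                    then enat (LEAST n. n \<ge> 1 \<and> C n \<omega> \<inter> bwdcs C n 1 \<omega> = {}) else \<infinity>)"

definition u0 :: "(nat \<Rightarrow> 'p::metric_space \<Rightarrow> real \<Rightarrow> real) \<Rightarrow> real \<Rightarrow> 'p \<Rightarrow> 'p \<Rightarrow> nat \<Rightarrow> enat" where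
  "u0 w \<alpha> th0 th1 T = (if \<exists>t\<ge>1. w t th1 \<alpha> + w T th0 \<alpha> < dist th1 th0
                        then enat (LEAST t. t \<ge> 1 \<and> w t th1 \<alpha> + w T th0 \<alpha> < dist th1 th0) else \<infinity>)"

end

theory Submission
  imports Defs
begin

(* Without a change all data are i.i.d. from P theta0, and the detector can stop at time m only
   if the forward sequence or the backward sequence B^(m)_1 misses theta0.  The first event has
   probability at most alpha, and since reversing i.i.d. data does not change their law, so has
   each of the others.  A union bound gives P(tau > n) >= 1 - (n + 1) alpha, and summing these
   tail probabilities up to n = floor(1/alpha) gives E tau >= 1/(2 alpha) - 3/2.

   After a change at T, C_T lies within w(T, theta0, alpha) of theta0, while by nesting B^(T+u)_1
   is contained in the set built from the u post-change observations X_(T+u), ..., X_(T+1), which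
   lies within w(u, theta1, alpha) of theta1.  For u = u0 the two sets are separated, so
   tau <= T + u0.  Pointwise widths hold almost surely here, hence so does this bound, and the
   conditional delay is at most u0 without using E or alpha < 1/2. *)

lemma measurable_merge_PiM:
  assumes "\<And>i. i \<in> J \<Longrightarrow> M i = N i"
  shows "(\<lambda>(x, y). \<lambda>i. if i \<in> J then x i else y i) \<in> measurable (PiM I M \<Otimes>\<^sub>M PiM I N) (PiM I N)"
proof (rule measurable_PiM_single')
  fix i assume "i \<in> I"
  show "(\<lambda>z. (case z of (x, y) \<Rightarrow> \<lambda>i. if i \<in> J then x i else y i) i) \<in> measurable (PiM I M \<Otimes>\<^sub>M PiM I N) (N i)"
  proof (cases "i \<in> J")
    case True
    then have "N i = M i" by (simp add: assms)
    with \<open>i \<in> I\<close> True show ?thesis by (simp add: case_prod_beta')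
  qed (use \<open>i \<in> I\<close> in \<open>simp add: case_prod_beta'\<close>)
next
  show "(\<lambda>(x, y). \<lambda>i. if i \<in> J then x i else y i) \<in> space (PiM I M \<Otimes>\<^sub>M PiM I N) \<rightarrow> (\<Pi>\<^sub>E i\<in>I. space (N i))"
    using assms by (auto simp: space_pair_measure space_PiM PiE_iff extensional_def) metis
qed

lemma distr_merge_PiM:
  assumes M: "\<And>i. prob_space (M i)" and N: "\<And>i. prob_space (N i)"
    and eq: "\<And>i. i \<in> J \<Longrightarrow> M i = N i"
  shows "distr (PiM I M \<Otimes>\<^sub>M PiM I N) (PiM I N) (\<lambda>(x, y). \<lambda>i. if i \<in> J then x i else y i) = PiM I N"
    (is "distr ?P _ ?f = _")
proof (rule measure_eqI_PiM_infinite[symmetric, OF refl])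
  interpret PM: prob_space "PiM I M" by (rule prob_space_PiM) (rule M)
  interpret PN: prob_space "PiM I N" by (rule prob_space_PiM) (rule N)
  show "finite_measure (PiM I N)" by unfold_locales
  fix A and K :: "'a set" assume K: "finite K" "K \<subseteq> I" and A: "\<And>i. i \<in> K \<Longrightarrow> A i \<in> sets (N i)"
  have AM: "i \<in> K \<inter> J \<Longrightarrow> A i \<in> sets (M i)" for i using A eq by auto
  have "?f -` prod_emb I N K (Pi\<^sub>E K A) \<inter> space ?P
      = prod_emb I M (K \<inter> J) (Pi\<^sub>E (K \<inter> J) A) \<times> prod_emb I N (K - J) (Pi\<^sub>E (K - J) A)"
    using A[THEN sets.sets_into_space] eq K
    by (auto simp: prod_emb_def space_pair_measure space_PiM PiE_iff Pi_iff extensional_def split: if_splits) metis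
  then have "distr ?P (PiM I N) ?f (prod_emb I N K (Pi\<^sub>E K A))
      = emeasure ?P (prod_emb I M (K \<inter> J) (Pi\<^sub>E (K \<inter> J) A) \<times> prod_emb I N (K - J) (Pi\<^sub>E (K - J) A))"
    using K A by (subst emeasure_distr[OF measurable_merge_PiM[OF eq]]) (auto intro!: sets_PiM_I)
  also have "\<dots> = emeasure (PiM I M) (prod_emb I M (K \<inter> J) (Pi\<^sub>E (K \<inter> J) A))
                * emeasure (PiM I N) (prod_emb I N (K - J) (Pi\<^sub>E (K - J) A))"
    using K A AM by (intro PN.emeasure_pair_measure_Times sets_PiM_I) auto
  also have "\<dots> = (\<Prod>i\<in>K \<inter> J. emeasure (M i) (A i)) * (\<Prod>i\<in>K - J. emeasure (N i) (A i))"
    using K A AM M N by (subst (1 2) emeasure_PiM_emb) auto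
  also have "\<dots> = (\<Prod>i\<in>K. emeasure (N i) (A i))"
    using K eq by (simp add: prod.Int_Diff[of K _ J])
  also have "\<dots> = emeasure (PiM I N) (prod_emb I N K (Pi\<^sub>E K A))"
    using K A N by (simp add: emeasure_PiM_emb)
  finally show "emeasure (PiM I N) (prod_emb I N K (Pi\<^sub>E K A))
      = emeasure (distr ?P (PiM I N) ?f) (prod_emb I N K (Pi\<^sub>E K A))"
    by simp
qed simp

(* Q need not be measurable: replacing the J-coordinates of a sample of PiM I N by those of an
   independent sample of PiM I M does not change its law. *)
lemma AE_PiM_transfer_local:
  assumes M: "\<And>i. prob_space (M i)" and N: "\<And>i. prob_space (N i)"
    and eq: "\<And>i. i \<in> J \<Longrightarrow> M i = N i"
    and local: "\<And>\<omega> \<omega>'. (\<forall>i\<in>J. \<omega> i = \<omega>' i) \<Longrightarrow> Q \<omega> = Q \<omega>'"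
    and AE_N: "AE \<omega> in PiM I N. Q \<omega>"
  shows "AE \<omega> in PiM I M. Q \<omega>"
proof -
  interpret PM: prob_space "PiM I M" by (rule prob_space_PiM) (rule M)
  interpret PN: prob_space "PiM I N" by (rule prob_space_PiM) (rule N)
  interpret pair_prob_space "PiM I M" "PiM I N" ..
  let ?f = "\<lambda>(x, y). \<lambda>i. if i \<in> J then x i else y i"
  have f_meas: "?f \<in> measurable (PiM I M \<Otimes>\<^sub>M PiM I N) (PiM I N)"
    using eq by (rule measurable_merge_PiM)
  have f_distr: "distr (PiM I M \<Otimes>\<^sub>M PiM I N) (PiM I N) ?f = PiM I N"
    using M N eq by (rule distr_merge_PiM)
  have "AE z in PiM I M \<Otimes>\<^sub>M PiM I N. Q (?f z)"
    using f_meas by (rule AE_distrD) (simp only: f_distr AE_N)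
  moreover have "Q (?f z) \<longleftrightarrow> Q (fst z)" for z
    by (intro local) (simp add: case_prod_beta')
  ultimately have "AE z in PiM I M \<Otimes>\<^sub>M PiM I N. Q (fst z)"
    by simp
  then have "AE x in PiM I M. AE y in PiM I N. Q x"
    using AE_pair by fastforce
  then show ?thesis by simp
qed

definition rev_index :: "nat \<Rightarrow> nat \<Rightarrow> nat" where
  "rev_index n s = (if 1 \<le> s \<and> s \<le> n then n + 1 - s else s)"

lemma revseq_eq_restrict: "revseq n = (\<lambda>\<omega>. \<lambda>s\<in>UNIV. \<omega> (rev_index n s))"
  by (auto simp: revseq_def rev_index_def fun_eq_iff)

lemma inj_rev_index: "inj (rev_index n)"
  unfolding inj_on_def rev_index_def by auto

lemma measurable_revseq: "revseq n \<in> measurable (PiM UNIV M) (PiM UNIV (\<lambda>i. M (rev_index n i)))"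
  unfolding revseq_eq_restrict by (intro measurable_restrict measurable_component_singleton) auto

lemma distr_revseq:
  assumes "\<And>i. prob_space (M i)"
  shows "distr (PiM UNIV M) (PiM UNIV (\<lambda>i. M (rev_index n i))) (revseq n) = PiM UNIV (\<lambda>i. M (rev_index n i))"
  unfolding revseq_eq_restrict by (rule distr_PiM_reindex) (use assms inj_rev_index in auto)

lemma sum_emeasure_less_le_nn_integral:
  fixes f :: "'a \<Rightarrow> enat"
  assumes meas: "\<And>n. {x\<in>space M. enat n < f x} \<in> sets M"
  shows "(\<Sum>n<K. emeasure M {x\<in>space M. enat n < f x}) \<le> (\<integral>\<^sup>+x. f x \<partial>M)"
proof -
  have count: "(\<Sum>n<K. indicator {x\<in>space M. enat n < f x} x) \<le> ennreal_of_enat (f x)"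
    if "x \<in> space M" for x
  proof (cases "f x")
    case (enat k)
    have "(\<Sum>n<K'. indicator {x\<in>space M. enat n < f x} x) = (of_nat (min K' k) :: ennreal)" for K'
      using that enat by (induction K') (auto simp: min_def)
    then show ?thesis using enat by simp
  qed simp
  have "(\<Sum>n<K. emeasure M {x\<in>space M. enat n < f x})
      = (\<integral>\<^sup>+x. (\<Sum>n<K. indicator {x\<in>space M. enat n < f x} x) \<partial>M)"
    using meas by (simp add: nn_integral_sum)
  also have "\<dots> \<le> (\<integral>\<^sup>+x. f x \<partial>M)"
    using count by (rule nn_integral_mono)
  finally show ?thesis .
qed

lemma sum_linear_tail_ge:
  fixes \<alpha> :: real
  assumes "0 < \<alpha>"
  shows "1 / (2 * \<alpha>) - 3 / 2 \<le> (\<Sum>n<nat \<lfloor>1 / \<alpha>\<rfloor>. 1 - (real n + 1) * \<alpha>)"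
proof -
  define x where "x = 1 / \<alpha>"
  define K where "K = real (nat \<lfloor>x\<rfloor>)"
  have sum: "(\<Sum>n<k. 1 - (real n + 1) * \<alpha>) = real k - \<alpha> * real k * (real k + 1) / 2" for k
    by (induction k) (auto simp: algebra_simps add_divide_distrib)
  have "x > 0" and \<alpha>: "\<alpha> = 1 / x" using assms by (simp_all add: x_def)
  have "K \<le> x" "x - 1 < K" using \<open>x > 0\<close> unfolding K_def by linarith+
  then have "(x - K) * (1 - (x - K)) \<ge> 0" by (intro mult_nonneg_nonneg) auto
  then have "x / 2 - 3 / 2 \<le> K - K * (K + 1) / (2 * x)"
    using \<open>x > 0\<close> by (simp add: field_simps)
  then show ?thesis
    unfolding sum x_def[symmetric] K_def[symmetric] using \<open>x > 0\<close> by (simp add: \<alpha> field_simps)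
qed

lemma nn_integral_enat_ge_of_linear_tail:
  fixes f :: "'a \<Rightarrow> enat" and \<alpha> :: real
  assumes "0 < \<alpha>"
    and meas: "\<And>n. {x\<in>space M. enat n < f x} \<in> sets M"
    and tail: "\<And>n. ennreal (1 - (real n + 1) * \<alpha>) \<le> emeasure M {x\<in>space M. enat n < f x}"
  shows "ennreal (1 / (2 * \<alpha>) - 3 / 2) \<le> (\<integral>\<^sup>+x. f x \<partial>M)"
proof -
  define K where "K = nat \<lfloor>1 / \<alpha>\<rfloor>"
  have nonneg: "0 \<le> 1 - (real n + 1) * \<alpha>" if "n \<in> {..<K}" for n
  proof -
    have "real n + 1 \<le> real K" using that by simp
    also have "real K \<le> 1 / \<alpha>" using \<open>0 < \<alpha>\<close> unfolding K_def by simp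
    finally show ?thesis using \<open>0 < \<alpha>\<close> by (simp add: field_simps)
  qed
  have "ennreal (1 / (2 * \<alpha>) - 3 / 2) \<le> ennreal (\<Sum>n<K. 1 - (real n + 1) * \<alpha>)"
    unfolding K_def by (intro ennreal_leI sum_linear_tail_ge \<open>0 < \<alpha>\<close>)
  also have "\<dots> = (\<Sum>n<K. ennreal (1 - (real n + 1) * \<alpha>))"
    by (rule sum_ennreal[symmetric]) (rule nonneg)
  also have "\<dots> \<le> (\<Sum>n<K. emeasure M {x\<in>space M. enat n < f x})"
    by (intro sum_mono tail)
  also have "\<dots> \<le> (\<integral>\<^sup>+x. f x \<partial>M)"
    using meas by (rule sum_emeasure_less_le_nn_integral)
  finally show ?thesis .
qed

lemma nn_integral_indicator_divide_le:
  fixes f :: "'a \<Rightarrow> ennreal"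
  assumes E: "E \<in> sets M" and bound: "AE x in M. x \<in> E \<longrightarrow> f x \<le> c"
  shows "(\<integral>\<^sup>+x. f x * indicator E x \<partial>M) / emeasure M E \<le> c"
proof -
  have "(\<integral>\<^sup>+x. f x * indicator E x \<partial>M) \<le> (\<integral>\<^sup>+x. c * indicator E x \<partial>M)"
    using bound by (intro nn_integral_mono_AE) (auto split: split_indicator elim!: eventually_mono)
  also have "\<dots> = c * emeasure M E"
    using E by (rule nn_integral_cmult_indicator)
  finally have "(\<integral>\<^sup>+x. f x * indicator E x \<partial>M) / emeasure M E \<le> c * emeasure M E / emeasure M E"
    by (rule divide_right_mono_ennreal)
  also have "\<dots> \<le> c"
    by (cases "emeasure M E = 0"; cases "emeasure M E = top") (simp_all add: ennreal_mult_divide_eq)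
  finally show ?thesis .
qed

lemma enat_less_bcs_tau_iff:
  "enat n < bcs_tau C \<omega> \<longleftrightarrow> (\<forall>m\<in>{1..n}. C m \<omega> \<inter> bwdcs C m 1 \<omega> \<noteq> {})"
proof (cases "\<exists>m\<ge>1. C m \<omega> \<inter> bwdcs C m 1 \<omega> = {}")
  case True
  define k where "k = (LEAST m. m \<ge> 1 \<and> C m \<omega> \<inter> bwdcs C m 1 \<omega> = {})"
  have k: "k \<ge> 1" "C k \<omega> \<inter> bwdcs C k 1 \<omega> = {}"
    using LeastI_ex[of "\<lambda>m. m \<ge> 1 \<and> C m \<omega> \<inter> bwdcs C m 1 \<omega> = {}"] True unfolding k_def by auto
  have least: "k \<le> m" if "m \<ge> 1" "C m \<omega> \<inter> bwdcs C m 1 \<omega> = {}" for m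
    unfolding k_def using that by (intro Least_le) simp
  have tau: "bcs_tau C \<omega> = enat k"
    using True by (simp add: bcs_tau_def k_def)
  show ?thesis
  proof
    assume less: "enat n < bcs_tau C \<omega>"
    show "\<forall>m\<in>{1..n}. C m \<omega> \<inter> bwdcs C m 1 \<omega> \<noteq> {}"
    proof (intro ballI notI)
      fix m assume "m \<in> {1..n}" "C m \<omega> \<inter> bwdcs C m 1 \<omega> = {}"
      then have "k \<le> n" using least by force
      with less tau show False by simp
    qed
  next
    assume "\<forall>m\<in>{1..n}. C m \<omega> \<inter> bwdcs C m 1 \<omega> \<noteq> {}"
    then have "n < k" using k by (meson atLeastAtMost_iff not_le)
    then show "enat n < bcs_tau C \<omega>" using tau by simp
  qed
qed (auto simp: bcs_tau_def)

lemma bcs_tau_le: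
  "1 \<le> n \<Longrightarrow> C n \<omega> \<inter> bwdcs C n 1 \<omega> = {} \<Longrightarrow> bcs_tau C \<omega> \<le> enat n"
  using enat_less_bcs_tau_iff[of n C \<omega>] by (auto simp: not_less[symmetric])

lemma sets_enat_less_bcs_tau:
  assumes "\<And>n. {\<omega>\<in>space M. C n \<omega> \<inter> bwdcs C n 1 \<omega> = {}} \<in> sets M"
  shows "{\<omega>\<in>space M. enat n < bcs_tau C \<omega>} \<in> sets M"
  unfolding enat_less_bcs_tau_iff using assms
  by (intro sets.sets_Collect_finite_All sets.sets_Collect_neg) auto

lemma chlaw_infinity: "chlaw P th0 th1 \<infinity> = iidlaw P th0"
  by (simp add: chlaw_def iidlaw_def)

lemma measure_revseq_vimage_iid:
  assumes "prob_space (P th)" and S: "S \<in> sets (iidlaw P th)"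
  shows "measure (iidlaw P th) (revseq n -` S \<inter> space (iidlaw P th)) = measure (iidlaw P th) S"
proof -
  have meas: "revseq n \<in> measurable (iidlaw P th) (iidlaw P th)"
    using measurable_revseq[of n "\<lambda>_. P th"] by (simp add: iidlaw_def)
  have "distr (iidlaw P th) (iidlaw P th) (revseq n) = iidlaw P th"
    using distr_revseq[of "\<lambda>_. P th" n] assms by (simp add: iidlaw_def)
  then show ?thesis
    using measure_distr[OF meas S] by simp
qed

lemma (in prob_space) prob_ge_by_union_bound:
  assumes S: "S \<in> events" and A: "A \<in> events" and R: "\<And>m. m \<in> I \<Longrightarrow> R m \<in> events"
    and "finite I" and cover: "space M - S \<subseteq> (space M - A) \<union> (\<Union>m\<in>I. R m)"
    and prob_A: "prob (space M - A) \<le> \<alpha>" and prob_R: "\<And>m. m \<in> I \<Longrightarrow> prob (R m) \<le> \<alpha>"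
  shows "1 - (real (card I) + 1) * \<alpha> \<le> prob S"
proof -
  have "prob (space M - S) \<le> prob ((space M - A) \<union> (\<Union>m\<in>I. R m))"
    using A R \<open>finite I\<close> cover by (intro finite_measure_mono) auto
  also have "\<dots> \<le> prob (space M - A) + prob (\<Union>m\<in>I. R m)"
    using A R \<open>finite I\<close> by (intro measure_Un_le) auto
  also have "\<dots> \<le> prob (space M - A) + (\<Sum>m\<in>I. prob (R m))"
    using R \<open>finite I\<close> by (simp add: measure_UNION_le)
  also have "\<dots> \<le> \<alpha> + real (card I) * \<alpha>"
    using prob_A prob_R sum_bounded_above[of I "\<lambda>m. prob (R m)" \<alpha>] by simp
  finally show ?thesis
    using prob_compl[OF S] by (simp add: algebra_simps)
qed

lemma emeasure_enat_less_bcs_tau_iid_ge: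
  fixes P :: "'p \<Rightarrow> 'x measure" and th :: 'p and \<alpha> :: real
  assumes prob: "prob_space (P th)"
    and cover: "1 - \<alpha> \<le> measure (iidlaw P th) {\<omega>\<in>space (iidlaw P th). \<forall>t\<ge>1. th \<in> C t \<omega>}"
    and meas_C: "\<And>t. {\<omega>\<in>space (iidlaw P th). th \<in> C t \<omega>} \<in> sets (iidlaw P th)"
    and meas_stop: "\<And>n. {\<omega>\<in>space (iidlaw P th). C n \<omega> \<inter> bwdcs C n 1 \<omega> = {}} \<in> sets (iidlaw P th)"
  shows "ennreal (1 - (real n + 1) * \<alpha>)
           \<le> emeasure (iidlaw P th) {\<omega>\<in>space (iidlaw P th). enat n < bcs_tau C \<omega>}"
proof -
  define L where "L = iidlaw P th"
  interpret L: prob_space L unfolding L_def iidlaw_def by (intro prob_space_PiM prob)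
  define A where "A = {\<omega>\<in>space L. \<forall>t\<ge>1. th \<in> C t \<omega>}"
  define R where "R m = revseq m -` (space L - {\<omega>\<in>space L. th \<in> C m \<omega>}) \<inter> space L" for m
  define S where "S = {\<omega>\<in>space L. enat n < bcs_tau C \<omega>}"
  have C_events: "{\<omega>\<in>space L. th \<in> C t \<omega>} \<in> L.events" for t
    using meas_C unfolding L_def .
  have A_events: "A \<in> L.events"
    unfolding A_def by (intro sets.sets_Collect_countable_All sets.sets_Collect_imp sets.sets_Collect_const C_events)
  have prob_A: "L.prob (space L - A) \<le> \<alpha>"
    using L.prob_compl[OF A_events] cover unfolding A_def L_def by simp
  have revseq_meas: "revseq m \<in> measurable L L" for m
    using measurable_revseq[of m "\<lambda>_. P th"] by (simp add: L_def iidlaw_def)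
  have R_events: "R m \<in> L.events" for m
    unfolding R_def by (rule measurable_sets[OF revseq_meas sets.Diff[OF sets.top C_events]])
  have prob_R: "L.prob (R m) \<le> \<alpha>" if "m \<in> {1..n}" for m
  proof -
    have "L.prob (R m) = L.prob (space L - {\<omega>\<in>space L. th \<in> C m \<omega>})"
      unfolding R_def L_def by (rule measure_revseq_vimage_iid[OF prob sets.Diff[OF sets.top meas_C]])
    also have "\<dots> \<le> L.prob (space L - A)"
      using that by (intro L.finite_measure_mono sets.Diff[OF sets.top A_events]) (auto simp: A_def)
    finally show ?thesis using prob_A by simp
  qed
  have "space L - S \<subseteq> (space L - A) \<union> (\<Union>m\<in>{1..n}. R m)"
  proof
    fix \<omega> assume \<omega>: "\<omega> \<in> space L - S"
    then obtain m where m: "m \<in> {1..n}" "C m \<omega> \<inter> C m (revseq m \<omega>) = {}"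
      unfolding S_def enat_less_bcs_tau_iff bwdcs_def by auto
    have "\<omega> \<in> R m" if "\<omega> \<in> A"
      using that m \<omega> measurable_space[OF revseq_meas, of \<omega>] unfolding A_def R_def by auto
    with m(1) \<omega> show "\<omega> \<in> (space L - A) \<union> (\<Union>m\<in>{1..n}. R m)" by blast
  qed
  then have "1 - (real n + 1) * \<alpha> \<le> L.prob S"
    using L.prob_ge_by_union_bound[of S A "{1..n}" R \<alpha>] A_events R_events prob_A prob_R
      sets_enat_less_bcs_tau[OF meas_stop]
    by (simp add: S_def L_def)
  then show ?thesis
    unfolding L_def[symmetric] S_def[symmetric] L.emeasure_eq_measure by (rule ennreal_leI)
qed

lemma nn_integral_bcs_tau_iid_ge:
  fixes P :: "'p \<Rightarrow> 'x measure" and th :: 'p and \<alpha> :: real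
  assumes "0 < \<alpha>" and "prob_space (P th)"
    and "1 - \<alpha> \<le> measure (iidlaw P th) {\<omega>\<in>space (iidlaw P th). \<forall>t\<ge>1. th \<in> C t \<omega>}"
    and "\<And>t. {\<omega>\<in>space (iidlaw P th). th \<in> C t \<omega>} \<in> sets (iidlaw P th)"
    and "\<And>n. {\<omega>\<in>space (iidlaw P th). C n \<omega> \<inter> bwdcs C n 1 \<omega> = {}} \<in> sets (iidlaw P th)"
  shows "ennreal (1 / (2 * \<alpha>) - 3 / 2) \<le> (\<integral>\<^sup>+\<omega>. bcs_tau C \<omega> \<partial>iidlaw P th)"
  using assms
  by (intro nn_integral_enat_ge_of_linear_tail sets_enat_less_bcs_tau emeasure_enat_less_bcs_tau_iid_ge)

lemma bcs_tau_le_if_separated: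
  assumes nested: "nested_cs C" and "1 \<le> T" "1 \<le> u"
    and pre: "\<forall>\<theta>\<in>C T \<omega>. dist th0 \<theta> \<le> r0"
    and post: "\<forall>\<theta>\<in>C u (revseq (T + u) \<omega>). dist th1 \<theta> \<le> r1"
    and sep: "r1 + r0 < dist th1 th0"
  shows "bcs_tau C \<omega> \<le> enat (T + u)"
proof (rule bcs_tau_le)
  show "1 \<le> T + u" using \<open>1 \<le> T\<close> by simp
  have "C (T + u) \<omega> \<subseteq> C T \<omega>" "C (T + u) (revseq (T + u) \<omega>) \<subseteq> C u (revseq (T + u) \<omega>)"
    using nested \<open>1 \<le> T\<close> \<open>1 \<le> u\<close> unfolding nested_cs_def by auto
  moreover have False if "\<theta> \<in> C T \<omega>" "\<theta> \<in> C u (revseq (T + u) \<omega>)" for \<theta>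
  proof -
    have "dist th1 th0 \<le> dist th1 \<theta> + dist th0 \<theta>"
      using dist_triangle[of th1 th0 \<theta>] by (simp add: dist_commute)
    also have "\<dots> \<le> r1 + r0" using pre post that by (intro add_mono) auto
    finally show False using sep by simp
  qed
  ultimately show "C (T + u) \<omega> \<inter> bwdcs C (T + u) 1 \<omega> = {}"
    unfolding bwdcs_def by auto
qed

lemma AE_pointwise_width_PiM:
  assumes width: "pointwise_width P \<alpha> w C"
    and adapted: "\<And>\<omega> \<omega>'. (\<forall>s\<in>{1..t}. \<omega> s = \<omega>' s) \<Longrightarrow> C t \<omega> = C t \<omega>'"
    and "1 \<le> t" and "prob_space (P th)" and "\<And>i. prob_space (N i)"
    and "\<And>i. i \<in> {1..t} \<Longrightarrow> N i = P th"
  shows "AE \<omega> in PiM UNIV N. \<forall>\<theta>\<in>C t \<omega>. dist th \<theta> \<le> w t th \<alpha>"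
proof (rule AE_PiM_transfer_local[where N="\<lambda>_. P th" and J="{1..t}"])
  show "AE \<omega> in PiM UNIV (\<lambda>_. P th). \<forall>\<theta>\<in>C t \<omega>. dist th \<theta> \<le> w t th \<alpha>"
    using width \<open>1 \<le> t\<close> unfolding pointwise_width_def iidlaw_def by blast
qed (use assms in metis)+

lemma AE_bcs_tau_le_chlaw:
  fixes P :: "'p::metric_space \<Rightarrow> 'x measure" and T u :: nat
  assumes probs: "\<And>th. prob_space (P th)"
    and adapted: "\<And>t \<omega> \<omega>'. (\<forall>s\<in>{1..t}. \<omega> s = \<omega>' s) \<Longrightarrow> C t \<omega> = C t \<omega>'"
    and nested: "nested_cs C" and width: "pointwise_width P \<alpha> w C"
    and "1 \<le> T" "1 \<le> u" and sep: "w u th1 \<alpha> + w T th0 \<alpha> < dist th1 th0"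
  shows "AE \<omega> in chlaw P th0 th1 (enat T). bcs_tau C \<omega> \<le> enat (T + u)"
proof -
  define M where "M t = (if enat t \<le> enat T then P th0 else P th1)" for t
  have M_prob: "prob_space (M t)" for t
    by (simp add: M_def probs)
  have pre: "AE \<omega> in PiM UNIV M. \<forall>\<theta>\<in>C T \<omega>. dist th0 \<theta> \<le> w T th0 \<alpha>"
    using width adapted \<open>1 \<le> T\<close> probs M_prob by (rule AE_pointwise_width_PiM) (auto simp: M_def)
  have rev_distr: "distr (PiM UNIV M) (PiM UNIV (\<lambda>i. M (rev_index (T + u) i))) (revseq (T + u))
      = PiM UNIV (\<lambda>i. M (rev_index (T + u) i))"
    by (rule distr_revseq) (rule M_prob)
  have "AE \<omega> in distr (PiM UNIV M) (PiM UNIV (\<lambda>i. M (rev_index (T + u) i))) (revseq (T + u)).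
      \<forall>\<theta>\<in>C u \<omega>. dist th1 \<theta> \<le> w u th1 \<alpha>"
    unfolding rev_distr using width adapted \<open>1 \<le> u\<close> probs M_prob
    by (rule AE_pointwise_width_PiM) (auto simp: M_def rev_index_def)
  then have post: "AE \<omega> in PiM UNIV M. \<forall>\<theta>\<in>C u (revseq (T + u) \<omega>). dist th1 \<theta> \<le> w u th1 \<alpha>"
    by (rule AE_distrD[OF measurable_revseq])
  from pre post have "AE \<omega> in PiM UNIV M. bcs_tau C \<omega> \<le> enat (T + u)"
    by eventually_elim (rule bcs_tau_le_if_separated[OF nested \<open>1 \<le> T\<close> \<open>1 \<le> u\<close> _ _ sep])
  then show ?thesis
    unfolding chlaw_def M_def .
qed

lemma conditional_delay_le_u0:
  fixes P :: "'p::metric_space \<Rightarrow> 'x measure" and T :: nat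
  assumes probs: "\<And>th. prob_space (P th)"
    and adapted: "\<And>t \<omega> \<omega>'. (\<forall>s\<in>{1..t}. \<omega> s = \<omega>' s) \<Longrightarrow> C t \<omega> = C t \<omega>'"
    and nested: "nested_cs C" and width: "pointwise_width P \<alpha> w C"
    and "1 \<le> T" and E: "E \<in> sets (chlaw P th0 th1 (enat T))"
  shows "(\<integral>\<^sup>+\<omega>. ennreal_of_enat (bcs_tau C \<omega> - enat T) * indicator E \<omega> \<partial>chlaw P th0 th1 (enat T))
           / emeasure (chlaw P th0 th1 (enat T)) E
         \<le> ennreal_of_enat (u0 w \<alpha> th0 th1 T)"
proof (cases "\<exists>u\<ge>1. w u th1 \<alpha> + w T th0 \<alpha> < dist th1 th0")
  case True
  define u where "u = (LEAST u. u \<ge> 1 \<and> w u th1 \<alpha> + w T th0 \<alpha> < dist th1 th0)"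
  have u: "1 \<le> u" "w u th1 \<alpha> + w T th0 \<alpha> < dist th1 th0"
    using LeastI_ex[of "\<lambda>u. u \<ge> 1 \<and> w u th1 \<alpha> + w T th0 \<alpha> < dist th1 th0"] True
    unfolding u_def by auto
  have "AE \<omega> in chlaw P th0 th1 (enat T). bcs_tau C \<omega> \<le> enat (T + u)"
    using probs adapted nested width \<open>1 \<le> T\<close> u by (rule AE_bcs_tau_le_chlaw)
  moreover have "ennreal_of_enat (x - enat T) \<le> of_nat u" if "x \<le> enat (T + u)" for x
    using that by (cases x) auto
  ultimately have "AE \<omega> in chlaw P th0 th1 (enat T).
      \<omega> \<in> E \<longrightarrow> ennreal_of_enat (bcs_tau C \<omega> - enat T) \<le> of_nat u"
    by (auto elim: eventually_mono)
  moreover have "u0 w \<alpha> th0 th1 T = enat u"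
    unfolding u0_def u_def using True by (rule if_P)
  ultimately show ?thesis
    using nn_integral_indicator_divide_le[OF E] by simp
next
  case False
  then have "u0 w \<alpha> th0 th1 T = \<infinity>"
    unfolding u0_def by (rule if_not_P)
  then show ?thesis by simp
qed

lemma le_mult_divide_ennreal:
  fixes x :: ennreal and b c :: real
  assumes "0 < b" "b \<le> c"
  shows "x \<le> ennreal c * x / ennreal b"
proof -
  have "ennreal c * x / ennreal b = x * ennreal (c / b)"
    using assms by (simp add: ennreal_times_divide[symmetric] divide_ennreal mult.commute)
  moreover have "x * 1 \<le> x * ennreal (c / b)"
    using assms by (intro mult_left_mono) (auto simp: ennreal_1[symmetric] simp del: ennreal_1 intro!: ennreal_leI)
  ultimately show ?thesis by simp
qed

theorem theorem1:
  fixes P :: "'p::metric_space \<Rightarrow> 'x measure"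
    and X :: "'x measure"
    and C :: "nat \<Rightarrow> (nat \<Rightarrow> 'x) \<Rightarrow> 'p set"
    and w :: "nat \<Rightarrow> 'p \<Rightarrow> real \<Rightarrow> real"
    and \<alpha> :: real and th0 th1 :: 'p
  assumes probs: "\<And>th. prob_space (P th)"
    and sets_P: "\<And>th. sets (P th) = sets X"
    and alpha: "0 < \<alpha>" "\<alpha> < 1"
    and fwd: "is_fwd_cs P \<alpha> C"
    and nested: "nested_cs C"
    and width: "pointwise_width P \<alpha> w C"
    and meas_C: "\<And>t th. {\<omega>\<in>space (\<Pi>\<^sub>M t\<in>UNIV. X). th \<in> C t \<omega>} \<in> sets (\<Pi>\<^sub>M t\<in>UNIV. X)"
    and meas_stop: "\<And>n. {\<omega>\<in>space (\<Pi>\<^sub>M t\<in>UNIV. X). C n \<omega> \<inter> bwdcs C n 1 \<omega> = {}}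
                          \<in> sets (\<Pi>\<^sub>M t\<in>UNIV. X)"
  shows "ennreal (1 / (2 * \<alpha>) - 3 / 2)
           \<le> (\<integral>\<^sup>+ \<omega>. ennreal_of_enat (bcs_tau C \<omega>) \<partial>chlaw P th0 th1 \<infinity>)
         \<and> (\<forall>T::nat. 1 \<le> T \<longrightarrow> \<alpha> < 1 / 2 \<longrightarrow>
           (let E = {\<omega>\<in>space (chlaw P th0 th1 (enat T)). \<forall>t. 1 \<le> t \<and> t < T \<longrightarrow> th0 \<in> C t \<omega>}
            in (\<integral>\<^sup>+ \<omega>. ennreal_of_enat (bcs_tau C \<omega> - enat T) * indicator E \<omega> \<partial>chlaw P th0 th1 (enat T))
                 / emeasure (chlaw P th0 th1 (enat T)) E
               \<le> 3 * ennreal_of_enat (u0 w \<alpha> th0 th1 T) / ennreal (1 - \<alpha>)))"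
proof -
  have adapted: "\<And>t \<omega> \<omega>'. (\<forall>s\<in>{1..t}. \<omega> s = \<omega>' s) \<Longrightarrow> C t \<omega> = C t \<omega>'"
    using fwd unfolding is_fwd_cs_def by blast
  have sets_chlaw: "sets (chlaw P th0 th1 T) = sets (\<Pi>\<^sub>M t\<in>UNIV. X)" for T
    unfolding chlaw_def by (rule sets_PiM_cong) (simp_all add: sets_P)
  note space_chlaw = sets_eq_imp_space_eq[OF sets_chlaw]
  have meas_C': "{\<omega>\<in>space (chlaw P th0 th1 T). th \<in> C t \<omega>} \<in> sets (chlaw P th0 th1 T)"
    and meas_stop': "{\<omega>\<in>space (chlaw P th0 th1 T). C n \<omega> \<inter> bwdcs C n 1 \<omega> = {}} \<in> sets (chlaw P th0 th1 T)"
    for T th t n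
    using meas_C meas_stop unfolding sets_chlaw space_chlaw by auto
  have "ennreal (1 / (2 * \<alpha>) - 3 / 2) \<le> (\<integral>\<^sup>+ \<omega>. ennreal_of_enat (bcs_tau C \<omega>) \<partial>chlaw P th0 th1 \<infinity>)"
    using alpha(1) probs fwd meas_C'[of \<infinity>] meas_stop'[of \<infinity>]
    unfolding chlaw_infinity is_fwd_cs_def by (intro nn_integral_bcs_tau_iid_ge) auto
  moreover have "(\<integral>\<^sup>+ \<omega>. ennreal_of_enat (bcs_tau C \<omega> - enat T) * indicator E \<omega> \<partial>chlaw P th0 th1 (enat T))
        / emeasure (chlaw P th0 th1 (enat T)) E
      \<le> 3 * ennreal_of_enat (u0 w \<alpha> th0 th1 T) / ennreal (1 - \<alpha>)"
    if "1 \<le> T" and E: "E = {\<omega>\<in>space (chlaw P th0 th1 (enat T)). \<forall>t. 1 \<le> t \<and> t < T \<longrightarrow> th0 \<in> C t \<omega>}"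
    for T :: nat and E
  proof (rule order_trans[OF conditional_delay_le_u0[OF probs adapted nested width \<open>1 \<le> T\<close>]])
    show "E \<in> sets (chlaw P th0 th1 (enat T))"
      unfolding E by (intro sets.sets_Collect_countable_All sets.sets_Collect_imp sets.sets_Collect_const meas_C')
    show "ennreal_of_enat (u0 w \<alpha> th0 th1 T) \<le> 3 * ennreal_of_enat (u0 w \<alpha> th0 th1 T) / ennreal (1 - \<alpha>)"
      using le_mult_divide_ennreal[of "1 - \<alpha>" 3] alpha by simp
  qed
  ultimately show ?thesis
    by (simp add: Let_def)
qed

end
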